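(* Let $k,r\in\mathbb N$, let $A\subseteq\Lambda_k^r$, $x\in\Lambda_k^r$ and $t>0$. If $(A^{-1}A)\cap U_t(x)=\varnothing$, then $|A|/|\Lambda_k^r|\le\exp(-t^2/4r)$.
   Context: $\Lambda_k=\{\lambda\in\mathbb C:\lambda^k=1\}$ is the multiplicative group of $k$-th roots of unity, and $\Lambda_k^r$ is its $r$-th Cartesian power with coordinatewise multiplication. For $A\subseteq\Lambda_k^r$, $A^{-1}A=\{a^{-1}b:a,b\in A\}$. Let $d_0$ be one half of Euclidean distance on $\Lambda_k$, and for $x,y\in\Lambda_k^r$ let $d(x,y)=\sum_{j=1}^r d_0(x_j,y_j)$. The Hamming ball is $U_t(x)=\{y\in\Lambda_k^r:d(x,y)\le t\}$. *)

theory Defs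
  imports Complex_Main "HOL-Library.FuncSet"
begin

definition roots_unity :: "nat \<Rightarrow> complex set" where
  "roots_unity k = {z. z ^ k = 1}"

definition cube :: "nat \<Rightarrow> nat \<Rightarrow> (nat \<Rightarrow> complex) set" where
  "cube k r = PiE {..<r} (\<lambda>_. roots_unity k)"

definition quot_vec :: "nat \<Rightarrow> (nat \<Rightarrow> complex) \<Rightarrow> (nat \<Rightarrow> complex) \<Rightarrow> (nat \<Rightarrow> complex)" where
  "quot_vec r a b = (\<lambda>j\<in>{..<r}. inverse (a j) * b j)"

definition diff_set :: "nat \<Rightarrow> (nat \<Rightarrow> complex) set \<Rightarrow> (nat \<Rightarrow> complex) set" where
  "diff_set r A = {quot_vec r a b | a b. a \<in> A \<and> b \<in> A}"

definition d0 :: "complex \<Rightarrow> complex \<Rightarrow> real" where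
  "d0 u v = cmod (u - v) / 2"

definition dist_h :: "nat \<Rightarrow> (nat \<Rightarrow> complex) \<Rightarrow> (nat \<Rightarrow> complex) \<Rightarrow> real" where
  "dist_h r x y = (\<Sum>j<r. d0 (x j) (y j))"

definition ball_h :: "nat \<Rightarrow> nat \<Rightarrow> real \<Rightarrow> (nat \<Rightarrow> complex) \<Rightarrow> (nat \<Rightarrow> complex) set" where
  "ball_h k r t x = {y \<in> cube k r. dist_h r x y \<le> t}"

end

theory Submission
  imports Defs "HOL-Probability.Hoeffding"
begin

text \<open>
  Talagrand's exponential inequality on a product \<open>S\<^sup>n\<close> of finite sets with a coordinatewise
  cost bounded by 1: if \<open>d(y, A)\<close> is the distance of \<open>y\<close> to \<open>A\<close>, then
  \<open>|A| \<Sum>\<^sub>y exp (\<lambda> d(y, A)) \<le> (|S|\<^sup>2 cosh\<^sup>2 (\<lambda>/2))\<^sup>n\<close>, by induction on \<open>n\<close>, splitting \<open>A\<close>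
  into its fibres over the last coordinate.  If every point of a second set \<open>B\<close> lies at
  distance at least \<open>t\<close> from \<open>A\<close>, then \<open>\<lambda> = 2t/n\<close> and \<open>cosh x \<le> exp (x\<^sup>2/2)\<close> give
  \<open>|A| |B| \<le> |S|\<^sup>2\<^sup>n exp (-t\<^sup>2/n)\<close>.  For \<open>A \<subseteq> \<Lambda>\<^sub>k\<^sup>r\<close> the translate \<open>A x\<close> is such a set \<open>B\<close>,
  because \<open>d(a x, b) = d(x, a\<^sup>-\<^sup>1 b)\<close> and \<open>a\<^sup>-\<^sup>1 b \<in> A\<^sup>-\<^sup>1A\<close> lies outside \<open>U\<^sub>t(x)\<close>; this even gives the
  bound \<open>exp (-t\<^sup>2/2r)\<close>.
\<close>

definition sum_dist :: "('a \<Rightarrow> 'a \<Rightarrow> real) \<Rightarrow> nat \<Rightarrow> (nat \<Rightarrow> 'a) \<Rightarrow> (nat \<Rightarrow> 'a) \<Rightarrow> real" where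
  "sum_dist c n x y = (\<Sum>j<n. c (x j) (y j))"

definition set_dist :: "('a \<Rightarrow> 'a \<Rightarrow> real) \<Rightarrow> nat \<Rightarrow> (nat \<Rightarrow> 'a) \<Rightarrow> (nat \<Rightarrow> 'a) set \<Rightarrow> real" where
  "set_dist c n y A = Min (sum_dist c n y ` A)"

definition exp_moment ::
    "('a \<Rightarrow> 'a \<Rightarrow> real) \<Rightarrow> 'a set \<Rightarrow> nat \<Rightarrow> real \<Rightarrow> (nat \<Rightarrow> 'a) set \<Rightarrow> real" where
  "exp_moment c S n l A = (\<Sum>y\<in>{..<n} \<rightarrow>\<^sub>E S. exp (l * set_dist c n y A))"

lemma sum_dist_fun_upd:
  "sum_dist c (Suc n) (f(n := s)) (g(n := s')) = sum_dist c n f g + c s s'"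
proof -
  have "(\<Sum>j<n. c ((f(n := s)) j) ((g(n := s')) j)) = (\<Sum>j<n. c (f j) (g j))"
    by (rule sum.cong) auto
  then show ?thesis
    unfolding sum_dist_def by simp
qed

lemma set_dist_le: "finite A \<Longrightarrow> a \<in> A \<Longrightarrow> set_dist c n y A \<le> sum_dist c n y a"
  unfolding set_dist_def by (rule Min_le) auto

lemma set_dist_attained:
  assumes "finite A" "A \<noteq> {}"
  obtains a where "a \<in> A" "set_dist c n y A = sum_dist c n y a"
proof -
  have "Min (sum_dist c n y ` A) \<in> sum_dist c n y ` A"
    using assms by (intro Min_in) auto
  then show ?thesis
    using that unfolding set_dist_def by auto
qed

lemma exp_moment_nonneg: "exp_moment c S n l A \<ge> 0"
  unfolding exp_moment_def by (intro sum_nonneg) auto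

lemma PiE_lessThan_Suc:
  "{..<Suc n} \<rightarrow>\<^sub>E S = (\<lambda>(s, f). f(n := s)) ` (S \<times> ({..<n} \<rightarrow>\<^sub>E S))"
  unfolding lessThan_Suc by (rule PiE_insert_eq)

lemma inj_on_fun_upd_PiE_lessThan:
  "inj_on (\<lambda>(s, f). f(n := s)) (S \<times> ({..<n :: nat} \<rightarrow>\<^sub>E S))"
  by (rule inj_combinator) simp

lemma sum_PiE_lessThan_Suc:
  "(\<Sum>g\<in>{..<Suc n} \<rightarrow>\<^sub>E S. h g) = (\<Sum>s\<in>S. \<Sum>f\<in>{..<n} \<rightarrow>\<^sub>E S. h (f(n := s)))"
  by (subst PiE_lessThan_Suc, subst sum.reindex[OF inj_on_fun_upd_PiE_lessThan])
     (simp add: sum.cartesian_product split_def)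

lemma card_eq_sum_card_fibres:
  assumes "finite S" "A \<subseteq> {..<Suc n} \<rightarrow>\<^sub>E S"
  shows "card A = (\<Sum>s\<in>S. card {f \<in> {..<n} \<rightarrow>\<^sub>E S. f(n := s) \<in> A})"
proof -
  let ?F = "\<lambda>s. {f \<in> {..<n} \<rightarrow>\<^sub>E S. f(n := s) \<in> A}"
  have A_eq: "A = (\<lambda>(s, f). f(n := s)) ` (SIGMA s:S. ?F s)"
    using assms(2) unfolding PiE_lessThan_Suc by force
  have "inj_on (\<lambda>(s, f). f(n := s)) (SIGMA s:S. ?F s)"
    by (rule inj_on_subset[OF inj_on_fun_upd_PiE_lessThan]) auto
  then have "card A = card (SIGMA s:S. ?F s)"
    by (subst A_eq, rule card_image)
  also have "\<dots> = (\<Sum>s\<in>S. card (?F s))"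
    using assms(1) by (simp add: card_SigmaI finite_PiE)
  finally show ?thesis .
qed

lemma interpolation_bound:
  fixes b c e T X P Q :: real
  assumes "0 < b" "0 \<le> c" "c \<le> b" "1 \<le> e" "0 \<le> T"
    and "0 \<le> P" "b * P \<le> X" "T \<le> e * P"
    and "0 < c \<Longrightarrow> T \<le> Q \<and> c * Q \<le> X"
  shows "b * T \<le> X * (1 + e - e * c / b)"
proof -
  have X: "0 \<le> X"
    using assms(1,6,7) by (meson mult_nonneg_nonneg less_imp_le order_trans)
  have "b * T \<le> e * X"
  proof -
    have "b * T \<le> b * (e * P)"
      using assms(1,8) by (intro mult_left_mono) auto
    also have "\<dots> \<le> e * X"
      using assms(4,7) by (simp add: mult.left_commute mult_left_mono)
    finally show ?thesis .
  qed
  show ?thesis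
  proof (cases "e * c < b")
    case True
    then have "e * c / b \<le> 1"
      using assms(1) by (simp add: divide_simps)
    then have "e \<le> 1 + e - e * c / b"
      by simp
    with \<open>b * T \<le> e * X\<close> X show ?thesis
      by (smt (verit, best) mult.commute mult_left_mono)
  next
    case False
    then have c: "0 < c"
      using assms(1,2) by (cases "c = 0") auto
    have "T \<le> Q" "c * Q \<le> X"
      using assms(9) c by auto
    then have "T * c \<le> X"
      using c by (smt (verit) mult.commute mult_right_mono)
    then have "T \<le> X / c"
      using c by (simp add: field_simps)
    then have "b * T \<le> b * (X / c)"
      using assms(1) by (intro mult_left_mono) auto
    also have "\<dots> = X * (b / c)"
      by simp
    also have "\<dots> \<le> X * (1 + e - e * c / b)"
    proof (intro mult_left_mono X)
      have "0 \<le> (b - c) * (e * c - b)"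
        using False assms(3) by (intro mult_nonneg_nonneg) auto
      then show "b / c \<le> 1 + e - e * c / b"
        using assms(1) c by (simp add: field_simps algebra_simps)
    qed
    finally show ?thesis .
  qed
qed

lemma cosh_half_power2: "cosh (x / 2) ^ 2 = (1 + exp x) ^ 2 / (4 * exp x)" for x :: real
  by (simp add: cosh_def power2_eq_square field_simps exp_minus flip: exp_add)

lemma cosh_le_exp_power2_half: "cosh x \<le> exp (x ^ 2 / 2)" for x :: real
proof -
  have "ln (cosh \<bar>x\<bar>) \<le> \<bar>x\<bar> ^ 2 / 2"
  proof -
    have "- (2 * \<bar>x\<bar>) * (1/2) + ln (1 + 1/2 * (exp (2 * \<bar>x\<bar>) - 1)) \<le> (2 * \<bar>x\<bar>) ^ 2 / 8"
      by (rule Hoeffdings_lemma_aux) auto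
    moreover have "1 + 1/2 * (exp (2 * \<bar>x\<bar>) - 1) = exp \<bar>x\<bar> * cosh \<bar>x\<bar>"
      by (simp add: cosh_def field_simps exp_minus flip: exp_add)
    ultimately show ?thesis
      by (simp add: ln_mult power2_eq_square)
  qed
  then show ?thesis
    by (metis cosh_real_abs cosh_real_pos exp_le_cancel_iff exp_ln power2_abs)
qed

lemma diff_mult_self_le: "0 < e \<Longrightarrow> (M - e * u) * u \<le> M ^ 2 / (4 * e)" for e M u :: real
  using mult_const_minus_self_real_le[of "e * u" M] by (simp add: field_simps)

lemma fibre_sum_bound:
  fixes a T :: "'b \<Rightarrow> real" and b e X :: real
  assumes "finite I" "0 < b" "0 < e" "0 \<le> X" "\<And>s. s \<in> I \<Longrightarrow> 0 \<le> a s"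
    and "\<And>s. s \<in> I \<Longrightarrow> b * T s \<le> X * (1 + e - e * a s / b)"
  shows "(\<Sum>s\<in>I. a s) * (\<Sum>s\<in>I. T s) \<le> X * ((card I * (1 + e)) ^ 2 / (4 * e))"
proof -
  define u where "u = (\<Sum>s\<in>I. a s) / b"
  have "0 \<le> u"
    unfolding u_def using assms(2,5) by (simp add: sum_nonneg)
  have "b * (\<Sum>s\<in>I. T s) \<le> (\<Sum>s\<in>I. X * (1 + e - e * a s / b))"
    unfolding sum_distrib_left using assms(6) by (rule sum_mono)
  also have "\<dots> = X * (card I * (1 + e) - e * u)"
    unfolding u_def
    by (simp add: sum_distrib_left sum_subtractf sum_divide_distrib[symmetric] algebra_simps)
  finally have "b * (\<Sum>s\<in>I. T s) * u \<le> X * (card I * (1 + e) - e * u) * u"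
    using \<open>0 \<le> u\<close> by (rule mult_right_mono)
  then have "(\<Sum>s\<in>I. a s) * (\<Sum>s\<in>I. T s) \<le> X * (card I * (1 + e) - e * u) * u"
    unfolding u_def using assms(2) by (simp add: field_simps)
  also have "\<dots> \<le> X * ((card I * (1 + e)) ^ 2 / (4 * e))"
    unfolding mult.assoc using assms(3,4) by (intro mult_left_mono diff_mult_self_le)
  finally show ?thesis .
qed

context
  fixes S :: "'a set" and c :: "'a \<Rightarrow> 'a \<Rightarrow> real"
  assumes finite_S: "finite S"
    and cost_self: "\<And>u. u \<in> S \<Longrightarrow> c u u = 0"
    and cost_le_1: "\<And>u v. u \<in> S \<Longrightarrow> v \<in> S \<Longrightarrow> c u v \<le> 1"
begin

lemma slice_moment_le_fibre:
  assumes "0 \<le> l" "finite A" "finite F" "F \<noteq> {}" "s \<in> S"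
    and "\<And>g. g \<in> F \<Longrightarrow> g(n := s) \<in> A"
  shows "(\<Sum>f\<in>{..<n} \<rightarrow>\<^sub>E S. exp (l * set_dist c (Suc n) (f(n := s)) A)) \<le> exp_moment c S n l F"
  unfolding exp_moment_def
proof (intro sum_mono, unfold exp_le_cancel_iff, intro mult_left_mono[OF _ assms(1)])
  fix f
  obtain g where g: "g \<in> F" "set_dist c n f F = sum_dist c n f g"
    using set_dist_attained[OF assms(3,4)] .
  have "set_dist c (Suc n) (f(n := s)) A \<le> sum_dist c (Suc n) (f(n := s)) (g(n := s))"
    using assms(2) assms(6)[OF g(1)] by (rule set_dist_le)
  also have "\<dots> = set_dist c n f F"
    using g cost_self[OF assms(5)] by (simp add: sum_dist_fun_upd)
  finally show "set_dist c (Suc n) (f(n := s)) A \<le> set_dist c n f F" .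
qed

lemma slice_moment_le_projection:
  assumes "0 \<le> l" "finite A" "finite B" "B \<noteq> {}" "s \<in> S"
    and "\<And>g. g \<in> B \<Longrightarrow> \<exists>s'\<in>S. g(n := s') \<in> A"
  shows "(\<Sum>f\<in>{..<n} \<rightarrow>\<^sub>E S. exp (l * set_dist c (Suc n) (f(n := s)) A))
    \<le> exp l * exp_moment c S n l B"
proof -
  have "set_dist c (Suc n) (f(n := s)) A \<le> set_dist c n f B + 1" for f
  proof -
    obtain g where g: "g \<in> B" "set_dist c n f B = sum_dist c n f g"
      using set_dist_attained[OF assms(3,4)] .
    then obtain s' where s': "s' \<in> S" "g(n := s') \<in> A"
      using assms(6) by blast
    have "set_dist c (Suc n) (f(n := s)) A \<le> sum_dist c (Suc n) (f(n := s)) (g(n := s'))"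
      using assms(2) s'(2) by (rule set_dist_le)
    also have "\<dots> \<le> set_dist c n f B + 1"
      using g cost_le_1[OF assms(5) s'(1)] by (simp add: sum_dist_fun_upd)
    finally show ?thesis .
  qed
  then have "(\<Sum>f\<in>{..<n} \<rightarrow>\<^sub>E S. exp (l * set_dist c (Suc n) (f(n := s)) A))
      \<le> (\<Sum>f\<in>{..<n} \<rightarrow>\<^sub>E S. exp (l * (set_dist c n f B + 1)))"
    using assms(1) by (intro sum_mono) (simp add: mult_left_mono)
  also have "\<dots> = exp l * exp_moment c S n l B"
    unfolding exp_moment_def sum_distrib_left by (simp add: algebra_simps exp_add)
  finally show ?thesis .
qed

text \<open>
  The fibres \<open>F s\<close> of \<open>A\<close> over the last coordinate and their union \<open>B\<close> give two bounds on
  each slice of the moment; interpolating between them with weight \<open>|F s|/|B|\<close> and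
  optimising over \<open>|A|/|B|\<close> produces the factor \<open>|S|\<^sup>2 cosh\<^sup>2(\<lambda>/2)\<close>.
\<close>
lemma exp_moment_Suc_le:
  assumes "0 \<le> l" "A \<subseteq> {..<Suc n} \<rightarrow>\<^sub>E S" "A \<noteq> {}"
    and IH: "\<And>A'. A' \<subseteq> {..<n} \<rightarrow>\<^sub>E S \<Longrightarrow> A' \<noteq> {} \<Longrightarrow> card A' * exp_moment c S n l A' \<le> X"
  shows "card A * exp_moment c S (Suc n) l A \<le> X * (real (card S) ^ 2 * cosh (l / 2) ^ 2)"
proof -
  define F where "F s = {f \<in> {..<n} \<rightarrow>\<^sub>E S. f(n := s) \<in> A}" for s
  define B where "B = {f \<in> {..<n} \<rightarrow>\<^sub>E S. \<exists>s\<in>S. f(n := s) \<in> A}"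
  define T where "T s = (\<Sum>f\<in>{..<n} \<rightarrow>\<^sub>E S. exp (l * set_dist c (Suc n) (f(n := s)) A))" for s
  have fin: "finite ({..<m} \<rightarrow>\<^sub>E S)" for m :: nat
    using finite_S by (simp add: finite_PiE)
  have "finite A"
    by (rule finite_subset[OF assms(2) fin])
  have "finite B" "\<And>s. finite (F s)"
    unfolding B_def F_def using fin by auto
  have "B \<noteq> {}"
  proof -
    obtain a where "a \<in> A"
      using assms(3) by blast
    moreover from this obtain s f where "s \<in> S" "f \<in> {..<n} \<rightarrow>\<^sub>E S" "a = f(n := s)"
      using assms(2) unfolding PiE_lessThan_Suc by auto
    ultimately show ?thesis
      unfolding B_def by auto
  qed
  have card_B: "0 < real (card B)"
    using \<open>finite B\<close> \<open>B \<noteq> {}\<close> by (simp add: card_gt_0_iff)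
  have IH_B: "card B * exp_moment c S n l B \<le> X"
    using \<open>B \<noteq> {}\<close> by (intro IH) (auto simp: B_def)
  have per_fibre: "card B * T s \<le> X * (1 + exp l - exp l * card (F s) / card B)" if "s \<in> S" for s
  proof (rule interpolation_bound[OF card_B _ _ _ _ exp_moment_nonneg IH_B])
    show "T s \<le> exp l * exp_moment c S n l B"
      unfolding T_def using assms(1) \<open>finite A\<close> \<open>finite B\<close> \<open>B \<noteq> {}\<close> that
      by (rule slice_moment_le_projection) (simp add: B_def)
    show "real (card (F s)) \<le> real (card B)"
      using card_mono[OF \<open>finite B\<close>, of "F s"] that by (auto simp: F_def B_def)
    show "T s \<le> exp_moment c S n l (F s) \<and> card (F s) * exp_moment c S n l (F s) \<le> X"
      if "0 < real (card (F s))"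
    proof
      have "F s \<noteq> {}"
        using that by auto
      show "T s \<le> exp_moment c S n l (F s)"
        unfolding T_def using assms(1) \<open>finite A\<close> \<open>finite (F s)\<close> \<open>F s \<noteq> {}\<close> \<open>s \<in> S\<close>
        by (rule slice_moment_le_fibre) (simp add: F_def)
      show "card (F s) * exp_moment c S n l (F s) \<le> X"
        using \<open>F s \<noteq> {}\<close> by (intro IH) (auto simp: F_def)
    qed
  qed (auto simp: T_def assms(1) intro: sum_nonneg)
  have "card A * exp_moment c S (Suc n) l A = (\<Sum>s\<in>S. real (card (F s))) * (\<Sum>s\<in>S. T s)"
    unfolding card_eq_sum_card_fibres[OF finite_S assms(2)] exp_moment_def T_def F_def
      sum_PiE_lessThan_Suc by simp
  also have "\<dots> \<le> X * ((card S * (1 + exp l)) ^ 2 / (4 * exp l))"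
  proof (rule fibre_sum_bound[OF finite_S card_B _ _ _ per_fibre])
    show "0 \<le> X"
      using IH_B card_B exp_moment_nonneg by (meson mult_nonneg_nonneg less_imp_le order_trans)
  qed simp_all
  also have "\<dots> = X * (real (card S) ^ 2 * cosh (l / 2) ^ 2)"
    unfolding cosh_half_power2 by (simp add: power_mult_distrib)
  finally show ?thesis .
qed

theorem talagrand_exp_moment:
  assumes "0 \<le> l" "A \<subseteq> {..<n} \<rightarrow>\<^sub>E S" "A \<noteq> {}"
  shows "card A * exp_moment c S n l A \<le> (real (card S) ^ 2 * cosh (l / 2) ^ 2) ^ n"
  using assms(2,3)
proof (induction n arbitrary: A)
  case 0
  then have "A = {\<lambda>_. undefined}"
    by auto
  then show ?case
    by (simp add: exp_moment_def set_dist_def sum_dist_def)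
next
  case (Suc n)
  then show ?case
    using exp_moment_Suc_le[OF assms(1) Suc.prems Suc.IH] by (simp add: mult.commute)
qed

corollary separated_sets_card_bound:
  assumes "0 \<le> t" "A \<subseteq> {..<n} \<rightarrow>\<^sub>E S" "B \<subseteq> {..<n} \<rightarrow>\<^sub>E S"
    and "\<And>y. y \<in> B \<Longrightarrow> t \<le> set_dist c n y A"
  shows "real (card A) * card B \<le> real (card ({..<n} \<rightarrow>\<^sub>E S)) ^ 2 * exp (- (t ^ 2) / n)"
proof (cases "A = {}")
  case False
  define l where "l = 2 * t / n"
  have "0 \<le> l"
    unfolding l_def using assms(1) by simp
  have "card B * exp (l * t) = (\<Sum>y\<in>B. exp (l * t))"
    by simp
  also have "\<dots> \<le> (\<Sum>y\<in>B. exp (l * set_dist c n y A))"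
    using assms(4) \<open>0 \<le> l\<close> by (intro sum_mono) (simp add: mult_left_mono)
  also have "\<dots> \<le> exp_moment c S n l A"
    unfolding exp_moment_def using finite_S assms(3) by (intro sum_mono2 finite_PiE) auto
  finally have "card A * (card B * exp (l * t)) \<le> card A * exp_moment c S n l A"
    by (simp add: mult_left_mono)
  also have "\<dots> \<le> (real (card S) ^ 2 * cosh (l / 2) ^ 2) ^ n"
    using \<open>0 \<le> l\<close> assms(2) False by (rule talagrand_exp_moment)
  also have "\<dots> \<le> (real (card S) ^ 2 * exp (l ^ 2 / 4)) ^ n"
  proof -
    have "cosh (l / 2) ^ 2 \<le> exp ((l / 2) ^ 2 / 2) ^ 2"
      by (intro power_mono cosh_le_exp_power2_half) simp
    also have "\<dots> = exp (l ^ 2 / 4)"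
      by (simp add: power2_eq_square flip: exp_add)
    finally show ?thesis
      by (intro power_mono mult_left_mono) auto
  qed
  also have "\<dots> = real (card ({..<n} \<rightarrow>\<^sub>E S)) ^ 2 * exp (n * l ^ 2 / 4)"
    by (simp add: card_PiE finite_S power_mult_distrib mult.commute flip: power_mult exp_of_nat_mult)
  finally have "real (card A) * card B \<le> real (card ({..<n} \<rightarrow>\<^sub>E S)) ^ 2 * (exp (n * l ^ 2 / 4) / exp (l * t))"
    by (simp add: field_simps)
  also have "exp (n * l ^ 2 / 4) / exp (l * t) = exp (- (t ^ 2) / n)"
    unfolding l_def by (cases "n = 0") (simp_all add: field_simps power2_eq_square flip: exp_diff)
  finally show ?thesis .
qed simp

end

lemma roots_unity_finite: "1 \<le> k \<Longrightarrow> finite (roots_unity k)"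
  unfolding roots_unity_def by (rule finite_roots_unity) simp

lemma finite_cube: "1 \<le> k \<Longrightarrow> finite (cube k r)"
  unfolding cube_def by (simp add: finite_PiE roots_unity_finite)

lemma roots_unity_norm: "1 \<le> k \<Longrightarrow> z \<in> roots_unity k \<Longrightarrow> norm z = 1"
  unfolding roots_unity_def using power_eq_1_iff[of z k] by auto

lemma roots_unity_mult: "z \<in> roots_unity k \<Longrightarrow> w \<in> roots_unity k \<Longrightarrow> z * w \<in> roots_unity k"
  unfolding roots_unity_def by (simp add: power_mult_distrib)

lemma roots_unity_inverse: "z \<in> roots_unity k \<Longrightarrow> inverse z \<in> roots_unity k"
  unfolding roots_unity_def by (simp add: power_inverse)

lemma d0_roots_unity_le_1:
  assumes "1 \<le> k" "u \<in> roots_unity k" "v \<in> roots_unity k"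
  shows "d0 u v \<le> 1"
  using norm_triangle_ineq4[of u v] roots_unity_norm[OF assms(1)] assms(2,3)
  unfolding d0_def by simp

definition mult_vec :: "nat \<Rightarrow> (nat \<Rightarrow> complex) \<Rightarrow> (nat \<Rightarrow> complex) \<Rightarrow> (nat \<Rightarrow> complex)" where
  "mult_vec r a x = (\<lambda>j\<in>{..<r}. a j * x j)"

lemma mult_vec_in_cube: "a \<in> cube k r \<Longrightarrow> x \<in> cube k r \<Longrightarrow> mult_vec r a x \<in> cube k r"
  unfolding mult_vec_def cube_def by (auto intro: roots_unity_mult)

lemma quot_vec_in_cube: "a \<in> cube k r \<Longrightarrow> b \<in> cube k r \<Longrightarrow> quot_vec r a b \<in> cube k r"
  unfolding quot_vec_def cube_def by (auto intro: roots_unity_mult roots_unity_inverse)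

lemma inj_on_mult_vec:
  assumes "1 \<le> k" "x \<in> cube k r"
  shows "inj_on (\<lambda>a. mult_vec r a x) (cube k r)"
proof
  fix a b assume ab: "a \<in> cube k r" "b \<in> cube k r" "mult_vec r a x = mult_vec r b x"
  show "a = b"
  proof (rule PiE_ext[OF ab(1,2)[unfolded cube_def]])
    fix j assume j: "j \<in> {..<r}"
    have "x j \<noteq> 0"
      using roots_unity_norm[OF assms(1)] assms(2) j unfolding cube_def by fastforce
    then show "a j = b j"
      using fun_cong[OF ab(3), of j] j unfolding mult_vec_def by simp
  qed
qed

lemma sum_dist_mult_vec:
  assumes "1 \<le> k" "a \<in> cube k r"
  shows "sum_dist d0 r (mult_vec r a x) b = dist_h r x (quot_vec r a b)"
  unfolding sum_dist_def dist_h_def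
proof (rule sum.cong)
  fix j assume j: "j \<in> {..<r}"
  have "norm (a j) = 1"
    using roots_unity_norm[OF assms(1)] assms(2) j unfolding cube_def by fastforce
  moreover have "a j * x j - b j = a j * (x j - inverse (a j) * b j)"
    using \<open>norm (a j) = 1\<close> by (cases "a j = 0") (simp_all add: field_simps)
  ultimately have "cmod (a j * x j - b j) = cmod (x j - inverse (a j) * b j)"
    by (simp add: norm_mult)
  then show "d0 (mult_vec r a x j) (b j) = d0 (x j) (quot_vec r a b j)"
    using j unfolding d0_def mult_vec_def quot_vec_def by simp
qed simp

lemma set_dist_mult_vec_gt:
  assumes "1 \<le> k" "A \<subseteq> cube k r" "a \<in> A" "diff_set r A \<inter> ball_h k r t x = {}"
  shows "t < set_dist d0 r (mult_vec r a x) A"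
proof -
  have "finite A"
    using assms(2) finite_cube[OF assms(1)] by (rule finite_subset)
  then obtain b where b: "b \<in> A" "set_dist d0 r (mult_vec r a x) A = sum_dist d0 r (mult_vec r a x) b"
    using set_dist_attained assms(3) by blast
  have "quot_vec r a b \<in> diff_set r A"
    unfolding diff_set_def using assms(3) b(1) by blast
  moreover have "quot_vec r a b \<in> cube k r"
    using assms(2,3) b(1) by (blast intro: quot_vec_in_cube)
  ultimately have "t < dist_h r x (quot_vec r a b)"
    using assms(4) unfolding ball_h_def by fastforce
  then show ?thesis
    using b(2) sum_dist_mult_vec[OF assms(1)] assms(2,3) by auto
qed

lemma card_power2_le_if_diff_set_avoids_ball:
  assumes "1 \<le> k" "A \<subseteq> cube k r" "x \<in> cube k r" "0 \<le> t"
    and "diff_set r A \<inter> ball_h k r t x = {}"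
  shows "real (card A) ^ 2 \<le> real (card (cube k r)) ^ 2 * exp (- (t ^ 2) / r)"
proof -
  let ?B = "(\<lambda>a. mult_vec r a x) ` A"
  have "card ?B = card A"
    using inj_on_subset[OF inj_on_mult_vec[OF assms(1,3)] assms(2)] by (rule card_image)
  moreover have "real (card A) * card ?B \<le> real (card (cube k r)) ^ 2 * exp (- (t ^ 2) / r)"
    unfolding cube_def
  proof (rule separated_sets_card_bound[OF roots_unity_finite[OF assms(1)] _ _ assms(4)])
    show "?B \<subseteq> {..<r} \<rightarrow>\<^sub>E roots_unity k" "A \<subseteq> {..<r} \<rightarrow>\<^sub>E roots_unity k"
      using assms(2) mult_vec_in_cube[OF _ assms(3)] unfolding cube_def by blast+
    show "t \<le> set_dist d0 r y A" if y: "y \<in> ?B" for y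
    proof -
      obtain a where "a \<in> A" "y = mult_vec r a x"
        using y by blast
      then show ?thesis
        using set_dist_mult_vec_gt[OF assms(1,2) _ assms(5)] by (simp add: less_imp_le)
    qed
    show "d0 u v \<le> 1" if "u \<in> roots_unity k" "v \<in> roots_unity k" for u v
      using d0_roots_unity_le_1[OF assms(1) that] .
  qed (simp add: d0_def)
  ultimately show ?thesis
    by (simp add: power2_eq_square)
qed

theorem lemma6p2:
  fixes k r :: nat and A :: "(nat \<Rightarrow> complex) set" and x :: "nat \<Rightarrow> complex" and t :: real
  assumes "k \<ge> 1" and "r \<ge> 1"
    and "A \<subseteq> cube k r" and "x \<in> cube k r" and "t > 0"
    and "diff_set r A \<inter> ball_h k r t x = {}"
  shows "real (card A) / real (card (cube k r)) \<le> exp (- (t ^ 2) / (4 * real r))"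
proof -
  let ?N = "real (card (cube k r))"
  have "0 < ?N"
    using finite_cube[OF assms(1)] assms(4) card_gt_0_iff by fastforce
  then have "(real (card A) / ?N) ^ 2 \<le> exp (- (t ^ 2) / r)"
    using card_power2_le_if_diff_set_avoids_ball[OF assms(1,3,4) _ assms(6)] assms(5)
    by (simp add: power_divide pos_divide_le_eq mult.commute)
  also have "\<dots> = exp (- (t ^ 2) / (2 * real r)) ^ 2"
    by (simp add: power2_eq_square flip: exp_add)
  finally have "real (card A) / ?N \<le> exp (- (t ^ 2) / (2 * real r))"
    by (rule power2_le_imp_le) simp
  also have "\<dots> \<le> exp (- (t ^ 2) / (4 * real r))"
    using assms(2) by (simp add: frac_le)
  finally show ?thesis .
qed

end
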